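(* Let $X$ be a compact metric space and $f: X \rightarrow X$ a continuous surjective map. Suppose there exist an infinite countable set $A=\{a_1,a_2,\dots\}\subset X$ and, for each $i\ge1$, a negative orbit $(x^i_{-n})_{n\ge 0}$ of $a_i$ (i.e. $x^i_0=a_i$ and $f(x^i_{-n-1})=x^i_{-n}$ for all $n\ge0$) such that: (i) the sets $L=\bigcup_{i\ge1}\big(\alpha((x^i_{-n})_{n\ge0},f)\cup\omega(a_i,f)\big)$ and $M=\bigcup_{i\ge1}\{x^i_{-n}: n\ge0\}$ are disjoint; (ii) for every pair $i\ne j$, $Orb((x^i_{-n})_{n\ge0},f)\cap Orb((x^j_{-n})_{n\ge0},f)=\emptyset$. Then $h(2^f)=\infty$.
   Context: $\alpha((x^i_{-n})_{n\ge0},f)$ is the set of accumulation points of the sequence $(x^i_{-n})$ as $n\to\infty$; $\omega(a_i,f)$ is the omega-limit set of $a_i$; $Orb((x^i_{-n})_{n\ge0},f)=\{x^i_{-n}:n\ge0\}\cup\{f^k(a_i):k\ge0\}$ is the full orbit through the given negative orbit. $2^X$ is the hyperspace of nonempty closed subsets with the Hausdorff metric, $2^f(B)=f(B)$, and $h$ is topological entropy. *)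

theory Defs
  imports "HOL-Analysis.Analysis"
begin

definition separated_set ::
  "('b \<Rightarrow> 'b \<Rightarrow> real) \<Rightarrow> ('b \<Rightarrow> 'b) \<Rightarrow> 'b set \<Rightarrow> nat \<Rightarrow> real \<Rightarrow> 'b set \<Rightarrow> bool" where
  "separated_set d g K n e E \<longleftrightarrow> E \<subseteq> K \<and> finite E \<and>
     (\<forall>x\<in>E. \<forall>y\<in>E. x \<noteq> y \<longrightarrow> (\<exists>k<n. d ((g ^^ k) x) ((g ^^ k) y) > e))"

definition topological_entropy ::
  "('b \<Rightarrow> 'b \<Rightarrow> real) \<Rightarrow> ('b \<Rightarrow> 'b) \<Rightarrow> 'b set \<Rightarrow> ereal" where
  "topological_entropy d g K =
     (SUP e\<in>{0<..}. limsup (\<lambda>n. SUP E\<in>{E. separated_set d g K n e E}.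
                                   ereal (ln (real (card E)) / real n)))"

definition hausdorff_dist :: "'a::metric_space set \<Rightarrow> 'a set \<Rightarrow> real" where
  "hausdorff_dist A B = max (SUP a\<in>A. infdist a B) (SUP b\<in>B. infdist b A)"

definition hyperspace :: "'a::metric_space set \<Rightarrow> 'a set set" where
  "hyperspace S = {B. B \<subseteq> S \<and> B \<noteq> {} \<and> closed B}"

text \<open>alpha-limit set of a sequence (set of accumulation points) and omega-limit set.\<close>
definition seq_accum :: "(nat \<Rightarrow> 'a::metric_space) \<Rightarrow> 'a set" where
  "seq_accum u = {y. \<exists>r. strict_mono r \<and> (\<lambda>k. u (r k)) \<longlonglongrightarrow> y}"

definition omega_limit :: "('a::metric_space \<Rightarrow> 'a) \<Rightarrow> 'a \<Rightarrow> 'a set" where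
  "omega_limit f x = seq_accum (\<lambda>k. (f ^^ k) x)"

end

theory Submission
  imports Defs
begin

text \<open>
  Code a set U of index pairs (i, m), with i < k and m < N, by the finite set
  B_U = {x i m | (i, m) \<in> U}. Since the full orbits are pairwise disjoint and no base point
  a_j = x j 0 is periodic (it is not in its own omega-limit set), f^n(x i m) = a_j holds only for
  i = j and m = n; so f^n(B_U) contains a_j iff (j, n) \<in> U. The base point a_j is not an
  accumulation point of the finitely many full orbits involved, hence is at distance at least some
  \<delta> > 0 from all their other points, and the 2^(k N) sets B_U are (N, \<delta>/2)-separated in the
  Hausdorff metric. Thus the entropy of the induced map is at least k ln 2 for every k.
\<close>

lemma funpow_image:
  fixes f :: "'a \<Rightarrow> 'a"
  shows "((\<lambda>B. f ` B) ^^ n) B = (f ^^ n) ` B"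
  by (induction n) (simp_all add: image_comp)

lemma hausdorff_dist_commute: "hausdorff_dist A B = hausdorff_dist B A"
  by (simp add: hausdorff_dist_def max.commute)

lemma hausdorff_dist_ge_isolated_point:
  assumes "finite A" "z \<in> A" "B \<noteq> {}" "\<And>y. y \<in> B \<Longrightarrow> \<delta> \<le> dist z y"
  shows "\<delta> \<le> hausdorff_dist A B"
proof -
  have "\<delta> \<le> infdist z B"
    unfolding infdist_notempty[OF \<open>B \<noteq> {}\<close>] by (rule cINF_greatest) (use assms in auto)
  also have "\<dots> \<le> (SUP a\<in>A. infdist a B)"
    by (rule cSUP_upper) (use assms in auto)
  finally show ?thesis
    unfolding hausdorff_dist_def by linarith
qed

lemma finite_not_islimpt_imp_uniformly_isolated:
  fixes z :: "'i \<Rightarrow> 'a::metric_space"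
  assumes "finite I" "\<And>i. i \<in> I \<Longrightarrow> \<not> z i islimpt P"
  shows "\<exists>\<delta>>0. \<forall>i\<in>I. \<forall>y\<in>P. y \<noteq> z i \<longrightarrow> \<delta> \<le> dist (z i) y"
  using assms
proof (induction I rule: finite_induct)
  case empty
  show ?case
    using zero_less_one by blast
next
  case (insert i I)
  then obtain \<delta> where \<delta>: "\<delta> > 0" "\<forall>i\<in>I. \<forall>y\<in>P. y \<noteq> z i \<longrightarrow> \<delta> \<le> dist (z i) y"
    by blast
  obtain e where e: "e > 0" "\<forall>y\<in>P. y \<noteq> z i \<longrightarrow> e \<le> dist (z i) y"
    using insert.prems[of i] unfolding islimpt_approachable by (auto simp: dist_commute not_less)
  show ?case
    using \<delta> e by (intro exI[of _ "min \<delta> e"]) (auto simp: min_le_iff_disj)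
qed

lemma topological_entropy_ge_ln:
  assumes "e > 0" "c \<ge> 1"
    and "\<And>N. N \<ge> 1 \<Longrightarrow> \<exists>E. separated_set d g K N e E \<and> c ^ N \<le> real (card E)"
  shows "ereal (ln c) \<le> topological_entropy d g K"
proof -
  let ?growth = "\<lambda>e n. SUP E\<in>{E. separated_set d g K n e E}. ereal (ln (real (card E)) / real n)"
  have "ereal (ln c) \<le> ?growth e N" if N: "N \<ge> 1" for N
  proof -
    obtain E where E: "separated_set d g K N e E" "c ^ N \<le> real (card E)"
      using assms(3)[OF N] by blast
    have "ln c = ln (c ^ N) / real N"
      using N by (simp add: ln_realpow)
    also have "\<dots> \<le> ln (real (card E)) / real N"
      using E(2) assms(2) by (intro divide_right_mono ln_mono) auto
    finally have "ereal (ln c) \<le> ereal (ln (real (card E)) / real N)"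
      by simp
    also have "\<dots> \<le> ?growth e N"
      by (rule SUP_upper) (use E(1) in simp)
    finally show ?thesis .
  qed
  then have "ereal (ln c) \<le> limsup (?growth e)"
    by (intro le_Limsup) (auto simp: eventually_sequentially)
  also have "\<dots> \<le> topological_entropy d g K"
    unfolding topological_entropy_def by (rule SUP_upper2[of e]) (use assms(1) in auto)
  finally show ?thesis .
qed

lemma topological_entropy_eq_infinity:
  assumes "\<And>k. k > 0 \<Longrightarrow>
    \<exists>e>0. \<forall>N\<ge>1. \<exists>E. separated_set d g K N e E \<and> 2 ^ (k * N) \<le> card E"
  shows "topological_entropy d g K = \<infinity>"
proof (rule ereal_top)
  fix B :: real
  obtain n :: nat where n: "B / ln 2 \<le> real n"
    using real_arch_simple by blast
  define k where "k = Suc n"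
  have "B \<le> real n * ln 2"
    using n by (simp add: field_simps)
  also have "\<dots> \<le> ln (2 ^ k)"
    unfolding ln_realpow k_def by simp
  finally have "B \<le> ln (2 ^ k)" .
  obtain e where "e > 0"
    and e: "\<forall>N\<ge>1. \<exists>E. separated_set d g K N e E \<and> 2 ^ (k * N) \<le> card E"
    using assms[of k] by (auto simp: k_def)
  have "ereal (ln (2 ^ k)) \<le> topological_entropy d g K"
  proof (rule topological_entropy_ge_ln[OF \<open>e > 0\<close>])
    fix N :: nat assume "N \<ge> 1"
    then obtain E where "separated_set d g K N e E" "2 ^ (k * N) \<le> card E"
      using e by blast
    moreover have "(2 ^ k) ^ N = real (2 ^ (k * N))"
      by (simp add: power_mult)
    ultimately show "\<exists>E. separated_set d g K N e E \<and> (2 ^ k) ^ N \<le> real (card E)"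
      by (metis of_nat_le_iff)
  qed simp
  with \<open>B \<le> ln (2 ^ k)\<close> show "ereal B \<le> topological_entropy d g K"
    by (meson ereal_less_eq(3) order.trans)
qed

definition full_orbit :: "('a \<Rightarrow> 'a) \<Rightarrow> (nat \<Rightarrow> 'a) \<Rightarrow> 'a set" where
  "full_orbit f u = range u \<union> range (\<lambda>k. (f ^^ k) (u 0))"

locale isolated_backward_orbits =
  fixes f :: "'a::metric_space \<Rightarrow> 'a" and x :: "nat \<Rightarrow> nat \<Rightarrow> 'a"
  assumes backward_step: "f (x i (Suc n)) = x i n"
    and base_not_alpha_limit: "x j 0 \<notin> seq_accum (x i)"
    and base_not_omega_limit: "x j 0 \<notin> omega_limit f (x i 0)"
    and full_orbits_disjoint: "i \<noteq> j \<Longrightarrow> full_orbit f (x i) \<inter> full_orbit f (x j) = {}"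
begin

lemma funpow_x_add: "(f ^^ n) (x i (n + m)) = x i m"
  by (induction n) (simp_all add: funpow_Suc_right backward_step del: funpow.simps)

lemma funpow_x: "(f ^^ n) (x i m) = (if n \<le> m then x i (m - n) else (f ^^ (n - m)) (x i 0))"
proof (cases "n \<le> m")
  case True
  then show ?thesis
    using funpow_x_add[of n i "m - n"] by simp
next
  case False
  then have "(f ^^ n) (x i m) = (f ^^ (n - m)) ((f ^^ m) (x i (m + 0)))"
    by (simp flip: funpow_add[THEN fun_cong, unfolded o_apply])
  then show ?thesis
    using False funpow_x_add[of m i 0] by simp
qed

lemma funpow_x_in_full_orbit: "(f ^^ n) (x i m) \<in> full_orbit f (x i)"
  by (cases "n \<le> m") (simp_all add: funpow_x[of n i m] full_orbit_def)

lemma base_not_periodic: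
  assumes "s > 0"
  shows "(f ^^ s) (x j 0) \<noteq> x j 0"
proof
  assume periodic: "(f ^^ s) (x j 0) = x j 0"
  have "(f ^^ (t * s)) (x j 0) = x j 0" for t
    by (induction t) (simp_all add: funpow_add periodic)
  moreover have "strict_mono (\<lambda>t. t * s)"
    using assms by (auto simp: strict_mono_def)
  ultimately have "x j 0 \<in> omega_limit f (x j 0)"
    unfolding omega_limit_def seq_accum_def by (intro CollectI exI[of _ "\<lambda>t. t * s"]) simp
  then show False
    using base_not_omega_limit by blast
qed

lemma funpow_x_eq_base_iff: "(f ^^ n) (x i m) = x j 0 \<longleftrightarrow> i = j \<and> m = n"
proof
  assume eq: "(f ^^ n) (x i m) = x j 0"
  have "x j 0 \<in> full_orbit f (x i)"
    using funpow_x_in_full_orbit[of n i m] eq by simp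
  moreover have "x j 0 \<in> full_orbit f (x j)"
    by (simp add: full_orbit_def)
  ultimately have "i = j"
    using full_orbits_disjoint[of i j] by (cases "i = j") auto
  moreover have "m = n"
  proof (rule ccontr)
    assume "m \<noteq> n"
    then consider "n < m" | "m < n" by linarith
    then show False
    proof cases
      case 1
      then have "x j (m - n) = x j 0"
        using eq \<open>i = j\<close> funpow_x[of n i m] by simp
      then have "(f ^^ (m - n)) (x j 0) = x j 0"
        using funpow_x_add[of "m - n" j 0] by simp
      then show False
        using 1 base_not_periodic by simp
    next
      case 2
      then have "(f ^^ (n - m)) (x j 0) = x j 0"
        using eq \<open>i = j\<close> funpow_x[of n i m] by simp
      then show False
        using 2 base_not_periodic by simp
    qed
  qed
  ultimately show "i = j \<and> m = n" ..
next
  assume "i = j \<and> m = n"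
  then show "(f ^^ n) (x i m) = x j 0"
    using funpow_x_add[of n j 0] by simp
qed

lemma base_not_islimpt_full_orbit: "\<not> x j 0 islimpt full_orbit f (x i)"
proof
  assume "x j 0 islimpt full_orbit f (x i)"
  then consider "x j 0 islimpt range (x i)" | "x j 0 islimpt range (\<lambda>k. (f ^^ k) (x i 0))"
    unfolding full_orbit_def islimpt_Un by blast
  then show False
  proof cases
    case 1
    then obtain r where "strict_mono r" "(x i \<circ> r) \<longlonglongrightarrow> x j 0"
      using islimpt_range_imp_convergent_subsequence by blast
    then have "x j 0 \<in> seq_accum (x i)"
      unfolding seq_accum_def o_def by blast
    then show False using base_not_alpha_limit by blast
  next
    case 2
    then obtain r where "strict_mono r" "((\<lambda>k. (f ^^ k) (x i 0)) \<circ> r) \<longlonglongrightarrow> x j 0"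
      using islimpt_range_imp_convergent_subsequence by blast
    then have "x j 0 \<in> omega_limit f (x i 0)"
      unfolding omega_limit_def seq_accum_def o_def by blast
    then show False using base_not_omega_limit by blast
  qed
qed

text \<open>The extra point x 0 N keeps code sets nonempty; none of its first N iterates is a base point.\<close>

definition code_set :: "nat \<Rightarrow> (nat \<times> nat) set \<Rightarrow> 'a set" where
  "code_set N U = (\<lambda>p. x (fst p) (snd p)) ` insert (0, N) U"

lemma base_in_funpow_image_code_set_iff:
  assumes "n < N"
  shows "x j 0 \<in> (f ^^ n) ` code_set N U \<longleftrightarrow> (j, n) \<in> U"
proof
  assume "x j 0 \<in> (f ^^ n) ` code_set N U"
  then obtain p where p: "x j 0 = (f ^^ n) (x (fst p) (snd p))" "p \<in> insert (0, N) U"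
    unfolding code_set_def image_image by (rule imageE)
  from p(1)[symmetric] have "p = (j, n)"
    by (simp add: funpow_x_eq_base_iff prod_eq_iff)
  with p(2) assms show "(j, n) \<in> U"
    by simp
next
  assume "(j, n) \<in> U"
  then have "x j n \<in> code_set N U"
    unfolding code_set_def by (intro image_eqI[of _ _ "(j, n)"]) auto
  then show "x j 0 \<in> (f ^^ n) ` code_set N U"
    by (rule rev_image_eqI) (use funpow_x_eq_base_iff[of n j n j] in simp)
qed

lemma funpow_image_code_set_subset:
  assumes "0 < k" "U \<subseteq> {..<k} \<times> UNIV"
  shows "(f ^^ n) ` code_set N U \<subseteq> (\<Union>i<k. full_orbit f (x i))"
proof
  fix y assume "y \<in> (f ^^ n) ` code_set N U"
  then obtain p where p: "y = (f ^^ n) (x (fst p) (snd p))" "p \<in> insert (0, N) U"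
    unfolding code_set_def image_image by (rule imageE)
  then have "fst p < k"
    using assms by auto
  with p show "y \<in> (\<Union>i<k. full_orbit f (x i))"
    using funpow_x_in_full_orbit by blast
qed

lemma code_set_in_hyperspace:
  assumes "\<And>i n. x i n \<in> S" "finite U"
  shows "code_set N U \<in> hyperspace S"
proof -
  have "finite (code_set N U)"
    using assms(2) by (simp add: code_set_def)
  moreover have "code_set N U \<subseteq> S"
    using assms(1) by (auto simp: code_set_def)
  moreover have "code_set N U \<noteq> {}"
    by (simp add: code_set_def)
  ultimately show ?thesis
    by (simp add: hyperspace_def finite_imp_closed)
qed

lemma inj_on_code_set: "inj_on (code_set N) (Pow ({..<k} \<times> {..<N}))"
proof (rule inj_onI)
  fix U U' assume "U \<in> Pow ({..<k} \<times> {..<N})" "U' \<in> Pow ({..<k} \<times> {..<N})"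
    and eq: "code_set N U = code_set N U'"
  then have U: "U \<subseteq> {..<k} \<times> {..<N}" "U' \<subseteq> {..<k} \<times> {..<N}"
    by simp_all
  have "(j, n) \<in> U \<longleftrightarrow> (j, n) \<in> U'" if "n < N" for j n
  proof -
    have "(j, n) \<in> U \<longleftrightarrow> x j 0 \<in> (f ^^ n) ` code_set N U"
      by (rule base_in_funpow_image_code_set_iff[OF that, symmetric])
    also have "\<dots> \<longleftrightarrow> (j, n) \<in> U'"
      unfolding eq by (rule base_in_funpow_image_code_set_iff[OF that])
    finally show ?thesis .
  qed
  with U show "U = U'"
    by fastforce
qed

lemma hausdorff_dist_funpow_image_code_sets_ge:
  assumes 0: "0 < k"
    and isolated: "\<And>j y. j < k \<Longrightarrow> y \<in> (\<Union>i<k. full_orbit f (x i)) \<Longrightarrow> y \<noteq> x j 0 \<Longrightarrow>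
      \<delta> \<le> dist (x j 0) y"
    and U: "U \<subseteq> {..<k} \<times> {..<N}" "U' \<subseteq> {..<k} \<times> {..<N}" "(j, n) \<in> U" "(j, n) \<notin> U'"
  shows "\<delta> \<le> hausdorff_dist ((f ^^ n) ` code_set N U) ((f ^^ n) ` code_set N U')"
proof (rule hausdorff_dist_ge_isolated_point)
  have jn: "j < k" "n < N"
    using U by auto
  have "finite U"
    using U(1) by (rule finite_subset) simp
  then show "finite ((f ^^ n) ` code_set N U)"
    by (simp add: code_set_def)
  show "x j 0 \<in> (f ^^ n) ` code_set N U"
    using U(3) jn(2) base_in_funpow_image_code_set_iff by blast
  show "(f ^^ n) ` code_set N U' \<noteq> {}"
    by (simp add: code_set_def)
  fix y assume "y \<in> (f ^^ n) ` code_set N U'"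
  moreover have "(f ^^ n) ` code_set N U' \<subseteq> (\<Union>i<k. full_orbit f (x i))"
    using 0 U(2) by (intro funpow_image_code_set_subset) auto
  moreover have "y \<noteq> x j 0" if "y \<in> (f ^^ n) ` code_set N U'"
    using that U(4) jn(2) base_in_funpow_image_code_set_iff by blast
  ultimately show "\<delta> \<le> dist (x j 0) y"
    using isolated jn(1) by blast
qed

lemma code_sets_separated_set:
  assumes in_S: "\<And>i n. x i n \<in> S" and "0 < k" "\<delta> > 0"
    and isolated: "\<And>j y. j < k \<Longrightarrow> y \<in> (\<Union>i<k. full_orbit f (x i)) \<Longrightarrow> y \<noteq> x j 0 \<Longrightarrow>
      \<delta> \<le> dist (x j 0) y"
  shows "separated_set hausdorff_dist (\<lambda>B. f ` B) (hyperspace S) N (\<delta> / 2)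
           (code_set N ` Pow ({..<k} \<times> {..<N}))"
  unfolding separated_set_def
proof (intro conjI ballI impI)
  show "code_set N ` Pow ({..<k} \<times> {..<N}) \<subseteq> hyperspace S"
  proof
    fix B assume "B \<in> code_set N ` Pow ({..<k} \<times> {..<N})"
    then obtain U where "B = code_set N U" "U \<subseteq> {..<k} \<times> {..<N}"
      by (auto elim!: imageE)
    moreover from this(2) have "finite U"
      by (rule finite_subset) simp
    ultimately show "B \<in> hyperspace S"
      using code_set_in_hyperspace[OF in_S] by simp
  qed
  show "finite (code_set N ` Pow ({..<k} \<times> {..<N}))"
    by simp
  fix B B' assume "B \<in> code_set N ` Pow ({..<k} \<times> {..<N})"
    and "B' \<in> code_set N ` Pow ({..<k} \<times> {..<N})" and "B \<noteq> B'"
  then obtain U U' where U: "U \<subseteq> {..<k} \<times> {..<N}" "U' \<subseteq> {..<k} \<times> {..<N}"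
    and B: "B = code_set N U" "B' = code_set N U'" and "U \<noteq> U'"
    by (auto elim!: imageE)
  then obtain j n where jn: "(j, n) \<in> U \<and> (j, n) \<notin> U' \<or> (j, n) \<in> U' \<and> (j, n) \<notin> U"
    by (metis subrelI subset_antisym)
  then have "n < N"
    using U by auto
  moreover from jn have "\<delta> \<le> hausdorff_dist ((f ^^ n) ` B) ((f ^^ n) ` B')"
  proof
    assume "(j, n) \<in> U \<and> (j, n) \<notin> U'"
    then show ?thesis
      unfolding B
      by (elim conjE) (rule hausdorff_dist_funpow_image_code_sets_ge[OF \<open>0 < k\<close> isolated U])
  next
    assume "(j, n) \<in> U' \<and> (j, n) \<notin> U"
    then show ?thesis
      unfolding B hausdorff_dist_commute[of "(f ^^ n) ` code_set N U"]
      by (elim conjE) (rule hausdorff_dist_funpow_image_code_sets_ge[OF \<open>0 < k\<close> isolated U(2,1)])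
  qed
  ultimately show "\<exists>n<N. \<delta> / 2 < hausdorff_dist (((\<lambda>B. f ` B) ^^ n) B) (((\<lambda>B. f ` B) ^^ n) B')"
    using \<open>\<delta> > 0\<close> by (auto simp: funpow_image)
qed

lemma card_code_sets: "card (code_set N ` Pow ({..<k} \<times> {..<N})) = 2 ^ (k * N)"
  by (simp add: card_image[OF inj_on_code_set] card_Pow card_cartesian_product)

lemma large_separated_sets:
  assumes "\<And>i n. x i n \<in> S" "0 < k"
  shows "\<exists>e>0. \<forall>N\<ge>1. \<exists>E. separated_set hausdorff_dist (\<lambda>B. f ` B) (hyperspace S) N e E \<and>
           2 ^ (k * N) \<le> card E"
proof -
  have "\<not> x j 0 islimpt (\<Union>i<k. full_orbit f (x i))" if "j \<in> {..<k}" for j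
    by (simp add: islimpt_finite_union_iff base_not_islimpt_full_orbit)
  from finite_not_islimpt_imp_uniformly_isolated[where z = "\<lambda>j. x j 0", OF finite_lessThan this]
  obtain \<delta> where "\<delta> > 0" and \<delta>:
    "\<forall>j\<in>{..<k}. \<forall>y\<in>(\<Union>i<k. full_orbit f (x i)). y \<noteq> x j 0 \<longrightarrow> \<delta> \<le> dist (x j 0) y"
    by blast
  have isolated: "\<delta> \<le> dist (x j 0) y"
    if "j < k" "y \<in> (\<Union>i<k. full_orbit f (x i))" "y \<noteq> x j 0" for j y
    using \<delta> that by (meson lessThan_iff)
  show ?thesis
  proof (intro exI[of _ "\<delta> / 2"] conjI allI impI)
    show "\<delta> / 2 > 0"
      using \<open>\<delta> > 0\<close> by simp
    fix N :: nat
    show "\<exists>E. separated_set hausdorff_dist (\<lambda>B. f ` B) (hyperspace S) N (\<delta> / 2) E \<and>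
      2 ^ (k * N) \<le> card E"
      using code_sets_separated_set[OF assms \<open>\<delta> > 0\<close> isolated] card_code_sets
      by (intro exI[of _ "code_set N ` Pow ({..<k} \<times> {..<N})"]) simp
  qed
qed

end

theorem theorem5p11:
  fixes S :: "'a::metric_space set" and f :: "'a \<Rightarrow> 'a"
    and a :: "nat \<Rightarrow> 'a" and x :: "nat \<Rightarrow> nat \<Rightarrow> 'a"
  assumes "compact S"
    and "continuous_on S f" and "f ` S = S"
    and "inj a" and "range a \<subseteq> S"
    and "\<And>i. x i 0 = a i"
    and "\<And>i n. x i n \<in> S"
    and "\<And>i n. f (x i (Suc n)) = x i n"
    and "(\<Union>i. seq_accum (x i) \<union> omega_limit f (a i)) \<inter> (\<Union>i. range (x i)) = {}"
    and "\<And>i j. i \<noteq> j \<Longrightarrow>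
           (range (x i) \<union> range (\<lambda>k. (f ^^ k) (a i))) \<inter>
           (range (x j) \<union> range (\<lambda>k. (f ^^ k) (a j))) = {}"
  shows "topological_entropy hausdorff_dist (\<lambda>B. f ` B) (hyperspace S) = \<infinity>"
proof -
  have a_eq: "a = (\<lambda>i. x i 0)"
    using assms(6) by (simp add: fun_eq_iff)
  interpret isolated_backward_orbits f x
  proof
    show "f (x i (Suc n)) = x i n" for i n
      by (fact assms(8))
    have "x j 0 \<in> (\<Union>i. range (x i))" for j
      by blast
    then show "x j 0 \<notin> seq_accum (x i)" "x j 0 \<notin> omega_limit f (x i 0)" for i j
      using assms(9) unfolding a_eq by blast+
    show "full_orbit f (x i) \<inter> full_orbit f (x j) = {}" if "i \<noteq> j" for i j
      using assms(10)[OF that] unfolding a_eq full_orbit_def .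
  qed
  show ?thesis
    by (rule topological_entropy_eq_infinity) (rule large_separated_sets[OF assms(7)])
qed

end
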